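(* For every closed $\varphi\in\mathrm{sHML}_F$, the monitor $\mathrm{m}(\varphi)$ is sound and violation-complete for $\varphi$ over finfinite traces. For every closed $\varphi\in\mathrm{cHML}_F$, $\mathrm{m}(\varphi)$ is sound and satisfaction-complete for $\varphi$ over finfinite traces.
   Context: Fix a finite set $\mathrm{Act}$ of actions, $\tau\notin\mathrm{Act}$. recHML formulae: $\varphi::=\mathrm{tt}\mid\mathrm{ff}\mid\varphi\vee\varphi\mid\varphi\wedge\varphi\mid\langle A\rangle\varphi\mid[A]\varphi\mid\min X.\varphi\mid\max X.\varphi\mid X$ ($A\subseteq\mathrm{Act}$), guarded. Fragments: $\mathrm{sHML}_F$: $\varphi::=\mathrm{tt}\mid\mathrm{ff}\mid[A]\varphi\mid\varphi\vee\varphi\mid\varphi\wedge\varphi\mid\max X.\varphi\mid X$; $\mathrm{cHML}_F$: $\varphi::=\mathrm{tt}\mid\mathrm{ff}\mid\langle A\rangle\varphi\mid\varphi\vee\varphi\mid\varphi\wedge\varphi\mid\min X.\varphi\mid X$. Finfinite traces $\mathrm{Fin}=\mathrm{Act}^\omega\cup\mathrm{Act}^*$; finfinite semantics: $[\![\mathrm{tt}]\!]_F=\mathrm{Fin}$, $[\![\mathrm{ff}]\!]_F=\emptyset$, $\vee,\wedge$ union/intersection, $[\![\langle A\rangle\varphi,\sigma]\!]_F=\{ag\mid a\in A,g\in[\![\varphi,\sigma]\!]_F\}$, $[\![[A]\varphi,\sigma]\!]_F=\{g\mid\forall a\in A,\forall g'.\ g=ag'\Rightarrow g'\in[\![\varphi,\sigma]\!]_F\}$,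 $\min/\max$ as least/greatest fixpoints (intersection of pre-fixpoints / union of post-fixpoints), $[\![X,\sigma]\!]_F=\sigma(X)$. Monitors: $m,n::=v\mid a.m\mid m+n\mid\mathrm{rec}\,x.m\mid x\mid m\otimes n\mid m\oplus n$, verdicts $v::=\mathrm{end}\mid\mathrm{no}\mid\mathrm{yes}$, with transitions ($\mu\in\mathrm{Act}\cup\{\tau\}$, $a\in\mathrm{Act}$, $\odot\in\{\otimes,\oplus\}$): $a.m\xrightarrow{a}m$; $\mathrm{rec}\,x.m\xrightarrow{\tau}m[\mathrm{rec}\,x.m/x]$; if $m\xrightarrow{\mu}m'$ then $m+n\xrightarrow{\mu}m'$ and $n+m\xrightarrow{\mu}m'$; $v\xrightarrow{a}v$; if $m\xrightarrow{a}m'$ and $n\xrightarrow{a}n'$ then $m\odot n\xrightarrow{a}m'\odot n'$; if $m\xrightarrow{\tau}m'$ then $m\odot n\xrightarrow{\tau}m'\odot n$ and $n\odot m\xrightarrow{\tau}n\odot m'$; $\mathrm{end}\odot\mathrm{end}\xrightarrow{\tau}\mathrm{end}$; $\mathrm{yes}\otimes m\xrightarrow{\tau}m$, $\mathrm{no}\otimes m\xrightarrow{\tau}\mathrm{no}$, $\mathrm{no}\oplus m\xrightarrow{\tau}m$, $\mathrm{yes}\oplus m\xrightarrow{\tau}\mathrm{yes}$ and their symmetric versions. Weak transitions $\Rightarrow,\overset{a}{\Longrightarrow},\overset{s}{\Longrightarrow}$ as usual. $m$ rejects (accepts) $s\in\mathrm{Act}^*$ if $m\overset{s}{\Longrightarrow}\mathrm{no}$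 ($\mathrm{yes}$), and rejects (accepts) $g\in\mathrm{Fin}$ if it rejects (accepts) some finite prefix of $g$. Soundness over finfinite traces: $m$ rejects $g$ implies $g\notin[\![\varphi]\!]_F$, and $m$ accepts $g$ implies $g\in[\![\varphi]\!]_F$, for all $g\in\mathrm{Fin}$; violation-complete: $g\notin[\![\varphi]\!]_F$ implies $m$ rejects $g$; satisfaction-complete: $g\in[\![\varphi]\!]_F$ implies $m$ accepts $g$. Monitor synthesis (writing $A.n$ for $\sum_{a\in A}a.n$, $\overline{A}=\mathrm{Act}\setminus A$, and omitting a summand whose action set is empty): $\mathrm{m}(\mathrm{tt})=\mathrm{yes}$, $\mathrm{m}(\mathrm{ff})=\mathrm{no}$, $\mathrm{m}(X)=x$, $\mathrm{m}(\varphi\wedge\psi)=\mathrm{m}(\varphi)\otimes\mathrm{m}(\psi)$, $\mathrm{m}(\varphi\vee\psi)=\mathrm{m}(\varphi)\oplus\mathrm{m}(\psi)$, $\mathrm{m}([A]\varphi)=A.\mathrm{m}(\varphi)+\overline{A}.\mathrm{yes}$, $\mathrm{m}(\langle A\rangle\varphi)=A.\mathrm{m}(\varphi)+\overline{A}.\mathrm{no}$, $\mathrm{m}(\max X.\varphi)=\mathrm{m}(\min X.\varphi)=\mathrm{rec}\,x.\mathrm{m}(\varphi)$. *)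

theory Defs
  imports Main
begin

(* Actions: a finite type 'a (Act = UNIV).  Fixpoint / recursion variables: nat. *)

datatype 'a fml =
    TT | FF
  | Or "'a fml" "'a fml" | And "'a fml" "'a fml"
  | Dia "'a set" "'a fml" | Box "'a set" "'a fml"
  | MinF nat "'a fml" | MaxF nat "'a fml" | Var nat

datatype 'a ftrace = FinT "'a list" | InfT "nat \<Rightarrow> 'a"

fun tcons :: "'a \<Rightarrow> 'a ftrace \<Rightarrow> 'a ftrace" where
  "tcons a (FinT l) = FinT (a # l)"
| "tcons a (InfT f) = InfT (case_nat a f)"

fun is_prefix :: "'a list \<Rightarrow> 'a ftrace \<Rightarrow> bool" where
  "is_prefix s (FinT l) = (s = take (length s) l \<and> length s \<le> length l)"
| "is_prefix s (InfT f) = (s = map f [0..<length s])"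

primrec sem :: "'a fml \<Rightarrow> (nat \<Rightarrow> 'a ftrace set) \<Rightarrow> 'a ftrace set" where
  "sem TT \<sigma> = UNIV"
| "sem FF \<sigma> = {}"
| "sem (Or \<phi> \<psi>) \<sigma> = sem \<phi> \<sigma> \<union> sem \<psi> \<sigma>"
| "sem (And \<phi> \<psi>) \<sigma> = sem \<phi> \<sigma> \<inter> sem \<psi> \<sigma>"
| "sem (Dia A \<phi>) \<sigma> = {tcons a g | a g. a \<in> A \<and> g \<in> sem \<phi> \<sigma>}"
| "sem (Box A \<phi>) \<sigma> = {g. \<forall>a\<in>A. \<forall>g'. g = tcons a g' \<longrightarrow> g' \<in> sem \<phi> \<sigma>}"
| "sem (MinF X \<phi>) \<sigma> = \<Inter>{S. sem \<phi> (\<sigma>(X := S)) \<subseteq> S}"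
| "sem (MaxF X \<phi>) \<sigma> = \<Union>{S. S \<subseteq> sem \<phi> (\<sigma>(X := S))}"
| "sem (Var X) \<sigma> = \<sigma> X"

(* semantics of closed formulae (environment irrelevant) *)
definition semF :: "'a fml \<Rightarrow> 'a ftrace set" where
  "semF \<phi> = sem \<phi> (\<lambda>_. {})"

primrec fv :: "'a fml \<Rightarrow> nat set" where
  "fv TT = {}" | "fv FF = {}"
| "fv (Or \<phi> \<psi>) = fv \<phi> \<union> fv \<psi>" | "fv (And \<phi> \<psi>) = fv \<phi> \<union> fv \<psi>"
| "fv (Dia A \<phi>) = fv \<phi>" | "fv (Box A \<phi>) = fv \<phi>"
| "fv (MinF X \<phi>) = fv \<phi> - {X}" | "fv (MaxF X \<phi>) = fv \<phi> - {X}"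
| "fv (Var X) = {X}"

definition closed :: "'a fml \<Rightarrow> bool" where
  "closed \<phi> \<longleftrightarrow> fv \<phi> = {}"

primrec unguarded :: "nat \<Rightarrow> 'a fml \<Rightarrow> bool" where
  "unguarded X TT = False" | "unguarded X FF = False"
| "unguarded X (Or \<phi> \<psi>) = (unguarded X \<phi> \<or> unguarded X \<psi>)"
| "unguarded X (And \<phi> \<psi>) = (unguarded X \<phi> \<or> unguarded X \<psi>)"
| "unguarded X (Dia A \<phi>) = False" | "unguarded X (Box A \<phi>) = False"
| "unguarded X (MinF Y \<phi>) = (X \<noteq> Y \<and> unguarded X \<phi>)"
| "unguarded X (MaxF Y \<phi>) = (X \<noteq> Y \<and> unguarded X \<phi>)"
| "unguarded X (Var Y) = (X = Y)"

primrec guarded :: "'a fml \<Rightarrow> bool" where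
  "guarded TT = True" | "guarded FF = True"
| "guarded (Or \<phi> \<psi>) = (guarded \<phi> \<and> guarded \<psi>)"
| "guarded (And \<phi> \<psi>) = (guarded \<phi> \<and> guarded \<psi>)"
| "guarded (Dia A \<phi>) = guarded \<phi>" | "guarded (Box A \<phi>) = guarded \<phi>"
| "guarded (MinF X \<phi>) = (\<not> unguarded X \<phi> \<and> guarded \<phi>)"
| "guarded (MaxF X \<phi>) = (\<not> unguarded X \<phi> \<and> guarded \<phi>)"
| "guarded (Var X) = True"

primrec sHML :: "'a fml \<Rightarrow> bool" where
  "sHML TT = True" | "sHML FF = True"
| "sHML (Or \<phi> \<psi>) = (sHML \<phi> \<and> sHML \<psi>)"
| "sHML (And \<phi> \<psi>) = (sHML \<phi> \<and> sHML \<psi>)"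
| "sHML (Dia A \<phi>) = False" | "sHML (Box A \<phi>) = sHML \<phi>"
| "sHML (MinF X \<phi>) = False" | "sHML (MaxF X \<phi>) = sHML \<phi>"
| "sHML (Var X) = True"

primrec cHML :: "'a fml \<Rightarrow> bool" where
  "cHML TT = True" | "cHML FF = True"
| "cHML (Or \<phi> \<psi>) = (cHML \<phi> \<and> cHML \<psi>)"
| "cHML (And \<phi> \<psi>) = (cHML \<phi> \<and> cHML \<psi>)"
| "cHML (Dia A \<phi>) = cHML \<phi>" | "cHML (Box A \<phi>) = False"
| "cHML (MinF X \<phi>) = cHML \<phi>" | "cHML (MaxF X \<phi>) = False"
| "cHML (Var X) = True"

datatype verdict = VEnd | VNo | VYes

datatype 'a mon =
    Verd verdict
  | Pre 'a "'a mon"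
  | Plus "'a mon" "'a mon"
  | Rec nat "'a mon"
  | MVar nat
  | MConj "'a mon" "'a mon"
  | MDisj "'a mon" "'a mon"

primrec msubst :: "'a mon \<Rightarrow> nat \<Rightarrow> 'a mon \<Rightarrow> 'a mon" where
  "msubst (Verd v) x n = Verd v"
| "msubst (Pre a m) x n = Pre a (msubst m x n)"
| "msubst (Plus m m') x n = Plus (msubst m x n) (msubst m' x n)"
| "msubst (Rec y m) x n = (if x = y then Rec y m else Rec y (msubst m x n))"
| "msubst (MVar y) x n = (if x = y then n else MVar y)"
| "msubst (MConj m m') x n = MConj (msubst m x n) (msubst m' x n)"
| "msubst (MDisj m m') x n = MDisj (msubst m x n) (msubst m' x n)"

(* transitions; None = tau, Some a = action a *)
inductive step :: "'a mon \<Rightarrow> 'a option \<Rightarrow> 'a mon \<Rightarrow> bool" where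
  sAct: "step (Pre a m) (Some a) m"
| sRec: "step (Rec x m) None (msubst m x (Rec x m))"
| sSelL: "step m \<mu> m' \<Longrightarrow> step (Plus m n) \<mu> m'"
| sSelR: "step m \<mu> m' \<Longrightarrow> step (Plus n m) \<mu> m'"
| sVerd: "step (Verd v) (Some a) (Verd v)"
| sParConj: "step m (Some a) m' \<Longrightarrow> step n (Some a) n' \<Longrightarrow> step (MConj m n) (Some a) (MConj m' n')"
| sParDisj: "step m (Some a) m' \<Longrightarrow> step n (Some a) n' \<Longrightarrow> step (MDisj m n) (Some a) (MDisj m' n')"
| sTauConjL: "step m None m' \<Longrightarrow> step (MConj m n) None (MConj m' n)"
| sTauConjR: "step m None m' \<Longrightarrow> step (MConj n m) None (MConj n m')"
| sTauDisjL: "step m None m' \<Longrightarrow> step (MDisj m n) None (MDisj m' n)"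
| sTauDisjR: "step m None m' \<Longrightarrow> step (MDisj n m) None (MDisj n m')"
| sEndConj: "step (MConj (Verd VEnd) (Verd VEnd)) None (Verd VEnd)"
| sEndDisj: "step (MDisj (Verd VEnd) (Verd VEnd)) None (Verd VEnd)"
| sYesConjL: "step (MConj (Verd VYes) m) None m"
| sYesConjR: "step (MConj m (Verd VYes)) None m"
| sNoConjL: "step (MConj (Verd VNo) m) None (Verd VNo)"
| sNoConjR: "step (MConj m (Verd VNo)) None (Verd VNo)"
| sNoDisjL: "step (MDisj (Verd VNo) m) None m"
| sNoDisjR: "step (MDisj m (Verd VNo)) None m"
| sYesDisjL: "step (MDisj (Verd VYes) m) None (Verd VYes)"
| sYesDisjR: "step (MDisj m (Verd VYes)) None (Verd VYes)"

definition tau_star :: "'a mon \<Rightarrow> 'a mon \<Rightarrow> bool" where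
  "tau_star = (\<lambda>m m'. step m None m')\<^sup>*\<^sup>*"

definition weak_step :: "'a mon \<Rightarrow> 'a \<Rightarrow> 'a mon \<Rightarrow> bool" where
  "weak_step m a m' \<longleftrightarrow> (\<exists>m1 m2. tau_star m m1 \<and> step m1 (Some a) m2 \<and> tau_star m2 m')"

fun weak_trace :: "'a mon \<Rightarrow> 'a list \<Rightarrow> 'a mon \<Rightarrow> bool" where
  "weak_trace m [] m' = tau_star m m'"
| "weak_trace m (a # s) m' = (\<exists>m''. weak_step m a m'' \<and> weak_trace m'' s m')"

definition rejects :: "'a mon \<Rightarrow> 'a ftrace \<Rightarrow> bool" where
  "rejects m g \<longleftrightarrow> (\<exists>s. is_prefix s g \<and> weak_trace m s (Verd VNo))"

definition accepts :: "'a mon \<Rightarrow> 'a ftrace \<Rightarrow> bool" where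
  "accepts m g \<longleftrightarrow> (\<exists>s. is_prefix s g \<and> weak_trace m s (Verd VYes))"

definition sound :: "'a mon \<Rightarrow> 'a fml \<Rightarrow> bool" where
  "sound m \<phi> \<longleftrightarrow> (\<forall>g. (rejects m g \<longrightarrow> g \<notin> semF \<phi>) \<and> (accepts m g \<longrightarrow> g \<in> semF \<phi>))"

definition violation_complete :: "'a mon \<Rightarrow> 'a fml \<Rightarrow> bool" where
  "violation_complete m \<phi> \<longleftrightarrow> (\<forall>g. g \<notin> semF \<phi> \<longrightarrow> rejects m g)"

definition satisfaction_complete :: "'a mon \<Rightarrow> 'a fml \<Rightarrow> bool" where
  "satisfaction_complete m \<phi> \<longleftrightarrow> (\<forall>g. g \<in> semF \<phi> \<longrightarrow> accepts m g)"

(* Synthesis.  A.n = sum over a\<in>A of a.n; summands with empty action set omitted.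
   The sum is built as a right-nested binary + over an enumeration of the action set
   (the order is immaterial). *)
definition enum_set :: "'a set \<Rightarrow> 'a list" where
  "enum_set A = (SOME xs. set xs = A \<and> distinct xs)"

fun sum_list_mon :: "'a mon list \<Rightarrow> 'a mon" where
  "sum_list_mon [] = Verd VEnd"   (* never used: Act = UNIV is nonempty *)
| "sum_list_mon [m] = m"
| "sum_list_mon (m # ms) = Plus m (sum_list_mon ms)"

definition guard_sum :: "'a set \<Rightarrow> 'a mon \<Rightarrow> 'a mon \<Rightarrow> 'a mon" where
  "guard_sum A n r = sum_list_mon (map (\<lambda>a. Pre a n) (enum_set A) @ map (\<lambda>a. Pre a r) (enum_set (- A)))"

primrec synth :: "('a::finite) fml \<Rightarrow> 'a mon" where
  "synth TT = Verd VYes"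
| "synth FF = Verd VNo"
| "synth (Var X) = MVar X"
| "synth (And \<phi> \<psi>) = MConj (synth \<phi>) (synth \<psi>)"
| "synth (Or \<phi> \<psi>) = MDisj (synth \<phi>) (synth \<psi>)"
| "synth (Box A \<phi>) = guard_sum A (synth \<phi>) (Verd VYes)"
| "synth (Dia A \<phi>) = guard_sum A (synth \<phi>) (Verd VNo)"
| "synth (MaxF X \<phi>) = Rec X (synth \<phi>)"
| "synth (MinF X \<phi>) = Rec X (synth \<phi>)"

end

theory Submission
  imports Defs
begin

text \<open>Synthesis commutes with substitution, so unfolding \<open>rec x. m(\<phi>)\<close> yields the monitor of
  the unfolded fixpoint formula. Hence every monitor reachable from \<open>m(\<psi>)\<close> along \<open>s\<close> is
  \<open>m(\<psi>')\<close> for a closed \<open>\<psi>'\<close> denoting \<open>{g. s g \<in> \<lbrakk>\<psi>\<rbrakk>}\<close>; since the verdicts \<open>yes\<close> and \<open>no\<close>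
  are synthesised only from \<open>tt\<close> and \<open>ff\<close>, this gives soundness for all closed formulae.

  For completeness, monitors of closed guarded formulae never block (by induction on the
  number of connectives above the modalities), so a verdict of one component of \<open>\<otimes>\<close> or \<open>\<oplus>\<close>
  reaches the whole monitor. Violation-completeness then follows by induction on an sHML
  formula under a closing substitution: the traces not rejected by the monitor of
  \<open>max X. \<phi>\<close> form a post-fixpoint of \<open>\<phi>\<close>. Dually, for cHML the traces accepted by the
  monitor of \<open>min X. \<phi>\<close> form a pre-fixpoint.\<close>

section \<open>Substitution and fixpoint unfolding\<close>

primrec subst_fml :: "(nat \<Rightarrow> 'a fml) \<Rightarrow> 'a fml \<Rightarrow> 'a fml" where
  "subst_fml \<theta> TT = TT"
| "subst_fml \<theta> FF = FF"
| "subst_fml \<theta> (Or \<phi> \<psi>) = Or (subst_fml \<theta> \<phi>) (subst_fml \<theta> \<psi>)"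
| "subst_fml \<theta> (And \<phi> \<psi>) = And (subst_fml \<theta> \<phi>) (subst_fml \<theta> \<psi>)"
| "subst_fml \<theta> (Dia A \<phi>) = Dia A (subst_fml \<theta> \<phi>)"
| "subst_fml \<theta> (Box A \<phi>) = Box A (subst_fml \<theta> \<phi>)"
| "subst_fml \<theta> (MinF X \<phi>) = MinF X (subst_fml (\<theta>(X := Var X)) \<phi>)"
| "subst_fml \<theta> (MaxF X \<phi>) = MaxF X (subst_fml (\<theta>(X := Var X)) \<phi>)"
| "subst_fml \<theta> (Var X) = \<theta> X"

text \<open>Sufficient for the naive substitution below binders to avoid capture.\<close>
definition capture_free :: "(nat \<Rightarrow> 'a fml) \<Rightarrow> 'a fml \<Rightarrow> bool" where
  "capture_free \<theta> \<phi> \<longleftrightarrow> (\<forall>Y\<in>fv \<phi>. fv (\<theta> Y) = {} \<or> \<theta> Y = Var Y)"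

lemma capture_free_binder:
  "capture_free \<theta> (MinF X \<phi>) \<Longrightarrow> capture_free (\<theta>(X := Var X)) \<phi>"
  "capture_free \<theta> (MaxF X \<phi>) \<Longrightarrow> capture_free (\<theta>(X := Var X)) \<phi>"
  by (auto simp: capture_free_def)

lemma fv_subst_fml: "fv (subst_fml \<theta> \<phi>) \<subseteq> (\<Union>Y\<in>fv \<phi>. fv (\<theta> Y))"
  by (induction \<phi> arbitrary: \<theta>) (fastforce split: if_splits)+

lemma closed_subst_fml: "\<forall>Y\<in>fv \<phi>. fv (\<theta> Y) = {} \<Longrightarrow> fv (subst_fml \<theta> \<phi>) = {}"
  using fv_subst_fml[of \<theta> \<phi>] by auto

lemma subst_fml_cong: "\<forall>Y\<in>fv \<phi>. \<theta> Y = \<theta>' Y \<Longrightarrow> subst_fml \<theta> \<phi> = subst_fml \<theta>' \<phi>"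
  by (induction \<phi> arbitrary: \<theta> \<theta>') auto

lemma subst_fml_Var [simp]: "subst_fml Var \<phi> = \<phi>"
  by (induction \<phi>) (auto simp: fun_upd_idem)

lemma subst_fml_closed: "fv \<phi> = {} \<Longrightarrow> subst_fml \<theta> \<phi> = \<phi>"
  using subst_fml_cong[of \<phi> \<theta> Var] by simp

lemma subst_fml_subst_fml:
  "capture_free \<theta> \<phi> \<Longrightarrow> subst_fml \<rho> (subst_fml \<theta> \<phi>) = subst_fml (\<lambda>Y. subst_fml \<rho> (\<theta> Y)) \<phi>"
proof (induction \<phi> arbitrary: \<theta> \<rho>)
  case (MinF X \<phi>)
  have "subst_fml (\<rho>(X := Var X)) (subst_fml (\<theta>(X := Var X)) \<phi>)
      = subst_fml (\<lambda>Y. subst_fml (\<rho>(X := Var X)) ((\<theta>(X := Var X)) Y)) \<phi>"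
    by (rule MinF.IH) (rule capture_free_binder(1)[OF MinF.prems])
  also have "\<dots> = subst_fml ((\<lambda>Y. subst_fml \<rho> (\<theta> Y))(X := Var X)) \<phi>"
    using MinF.prems by (intro subst_fml_cong) (auto simp: capture_free_def subst_fml_closed dest!: bspec)
  finally show ?case by simp
next
  case (MaxF X \<phi>)
  have "subst_fml (\<rho>(X := Var X)) (subst_fml (\<theta>(X := Var X)) \<phi>)
      = subst_fml (\<lambda>Y. subst_fml (\<rho>(X := Var X)) ((\<theta>(X := Var X)) Y)) \<phi>"
    by (rule MaxF.IH) (rule capture_free_binder(2)[OF MaxF.prems])
  also have "\<dots> = subst_fml ((\<lambda>Y. subst_fml \<rho> (\<theta> Y))(X := Var X)) \<phi>"
    using MaxF.prems by (intro subst_fml_cong) (auto simp: capture_free_def subst_fml_closed dest!: bspec)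
  finally show ?case by simp
qed (auto simp: capture_free_def)

lemma subst_fml_binder_body:
  assumes "\<forall>Y\<in>fv \<phi> - {X}. fv (\<theta> Y) = {}"
  shows "subst_fml (Var(X := M)) (subst_fml (\<theta>(X := Var X)) \<phi>) = subst_fml (\<theta>(X := M)) \<phi>"
proof -
  have "capture_free (\<theta>(X := Var X)) \<phi>"
    using assms by (auto simp: capture_free_def)
  moreover have "\<forall>Y\<in>fv \<phi>. subst_fml (Var(X := M)) ((\<theta>(X := Var X)) Y) = (\<theta>(X := M)) Y"
    using assms by (auto simp: subst_fml_closed)
  ultimately show ?thesis
    by (simp add: subst_fml_subst_fml subst_fml_cong)
qed

lemma sem_cong: "\<forall>Y\<in>fv \<phi>. \<sigma> Y = \<sigma>' Y \<Longrightarrow> sem \<phi> \<sigma> = sem \<phi> \<sigma>'"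
proof (induction \<phi> arbitrary: \<sigma> \<sigma>')
  case (MinF X \<phi>)
  then have "sem \<phi> (\<sigma>(X:=S)) = sem \<phi> (\<sigma>'(X:=S))" for S by (intro MinF.IH) auto
  then show ?case by simp
next
  case (MaxF X \<phi>)
  then have "sem \<phi> (\<sigma>(X:=S)) = sem \<phi> (\<sigma>'(X:=S))" for S by (intro MaxF.IH) auto
  then show ?case by simp
next
  case (Or \<phi> \<psi>)
  have "sem \<phi> \<sigma> = sem \<phi> \<sigma>'" "sem \<psi> \<sigma> = sem \<psi> \<sigma>'" by (rule Or.IH; use Or.prems in simp)+
  then show ?case by simp
next
  case (And \<phi> \<psi>)
  have "sem \<phi> \<sigma> = sem \<phi> \<sigma>'" "sem \<psi> \<sigma> = sem \<psi> \<sigma>'" by (rule And.IH; use And.prems in simp)+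
  then show ?case by simp
next
  case (Dia A \<phi>)
  have "sem \<phi> \<sigma> = sem \<phi> \<sigma>'" by (rule Dia.IH) (use Dia.prems in simp)
  then show ?case by simp
next
  case (Box A \<phi>)
  have "sem \<phi> \<sigma> = sem \<phi> \<sigma>'" by (rule Box.IH) (use Box.prems in simp)
  then show ?case by simp
qed simp_all

lemma sem_closed: "fv \<phi> = {} \<Longrightarrow> sem \<phi> \<sigma> = semF \<phi>"
  unfolding semF_def by (rule sem_cong) simp

lemma sem_subst_fml:
  "capture_free \<theta> \<phi> \<Longrightarrow> sem (subst_fml \<theta> \<phi>) \<sigma> = sem \<phi> (\<lambda>Y. sem (\<theta> Y) \<sigma>)"
proof (induction \<phi> arbitrary: \<theta> \<sigma>)
  case (MinF X \<phi>)
  have "sem (subst_fml (\<theta>(X := Var X)) \<phi>) (\<sigma>(X:=S)) = sem \<phi> (\<lambda>Y. sem ((\<theta>(X := Var X)) Y) (\<sigma>(X:=S)))"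
    for S by (rule MinF.IH) (rule capture_free_binder(1)[OF MinF.prems])
  also have "sem \<phi> (\<lambda>Y. sem ((\<theta>(X := Var X)) Y) (\<sigma>(X:=S))) = sem \<phi> ((\<lambda>Y. sem (\<theta> Y) \<sigma>)(X:=S))" for S
    using MinF.prems by (intro sem_cong) (auto simp: capture_free_def sem_closed dest!: bspec)
  finally show ?case by simp
next
  case (MaxF X \<phi>)
  have "sem (subst_fml (\<theta>(X := Var X)) \<phi>) (\<sigma>(X:=S)) = sem \<phi> (\<lambda>Y. sem ((\<theta>(X := Var X)) Y) (\<sigma>(X:=S)))"
    for S by (rule MaxF.IH) (rule capture_free_binder(2)[OF MaxF.prems])
  also have "sem \<phi> (\<lambda>Y. sem ((\<theta>(X := Var X)) Y) (\<sigma>(X:=S))) = sem \<phi> ((\<lambda>Y. sem (\<theta> Y) \<sigma>)(X:=S))" for S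
    using MaxF.prems by (intro sem_cong) (auto simp: capture_free_def sem_closed dest!: bspec)
  finally show ?case by simp
qed (auto simp: capture_free_def)

lemma sem_mono: "(\<And>Y. \<sigma> Y \<subseteq> \<sigma>' Y) \<Longrightarrow> sem \<phi> \<sigma> \<subseteq> sem \<phi> \<sigma>'"
proof (induction \<phi> arbitrary: \<sigma> \<sigma>')
  case (MinF X \<phi>)
  have "sem \<phi> (\<sigma>(X:=S)) \<subseteq> sem \<phi> (\<sigma>'(X:=S))" for S by (rule MinF.IH) (simp add: MinF.prems)
  then show ?case by (simp add: Inter_anti_mono subset_iff)
next
  case (MaxF X \<phi>)
  have "sem \<phi> (\<sigma>(X:=S)) \<subseteq> sem \<phi> (\<sigma>'(X:=S))" for S by (rule MaxF.IH) (simp add: MaxF.prems)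
  then show ?case by auto
next
  case (Or \<phi> \<psi>)
  have "sem \<phi> \<sigma> \<subseteq> sem \<phi> \<sigma>'" "sem \<psi> \<sigma> \<subseteq> sem \<psi> \<sigma>'" by (rule Or.IH, rule Or.prems)+
  then show ?case by auto
next
  case (And \<phi> \<psi>)
  have "sem \<phi> \<sigma> \<subseteq> sem \<phi> \<sigma>'" "sem \<psi> \<sigma> \<subseteq> sem \<psi> \<sigma>'" by (rule And.IH, rule And.prems)+
  then show ?case by auto
next
  case (Dia A \<phi>)
  have "sem \<phi> \<sigma> \<subseteq> sem \<phi> \<sigma>'" by (rule Dia.IH, rule Dia.prems)
  then show ?case by auto
next
  case (Box A \<phi>)
  have "sem \<phi> \<sigma> \<subseteq> sem \<phi> \<sigma>'" by (rule Box.IH, rule Box.prems)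
  then show ?case by auto
qed auto

lemma mono_sem_upd: "mono (\<lambda>S. sem \<phi> (\<sigma>(X := S)))"
  by (rule monoI, rule sem_mono) auto

lemma sem_subst_closed:
  "fv M = {} \<Longrightarrow> sem (subst_fml (Var(X := M)) \<phi>) \<sigma> = sem \<phi> (\<sigma>(X := sem M \<sigma>))"
proof -
  assume "fv M = {}"
  then have "capture_free (Var(X := M)) \<phi>" by (simp add: capture_free_def)
  moreover have "(\<lambda>Y. sem ((Var(X := M)) Y) \<sigma>) = \<sigma>(X := sem M \<sigma>)" by (simp add: fun_eq_iff)
  ultimately show ?thesis by (simp add: sem_subst_fml)
qed

lemma sem_MaxF_unfold:
  "fv (MaxF X \<phi>) = {} \<Longrightarrow> sem (subst_fml (Var(X := MaxF X \<phi>)) \<phi>) \<sigma> = sem (MaxF X \<phi>) \<sigma>"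
  using gfp_unfold[OF mono_sem_upd, of \<phi> \<sigma> X] by (simp add: sem_subst_closed gfp_def)

lemma sem_MinF_unfold:
  "fv (MinF X \<phi>) = {} \<Longrightarrow> sem (subst_fml (Var(X := MinF X \<phi>)) \<phi>) \<sigma> = sem (MinF X \<phi>) \<sigma>"
  using lfp_unfold[OF mono_sem_upd, of \<phi> \<sigma> X] by (simp add: sem_subst_closed lfp_def)

lemma unguarded_fv: "unguarded X \<phi> \<Longrightarrow> X \<in> fv \<phi>"
  by (induction \<phi>) auto

lemma unguarded_subst_fml:
  "capture_free \<theta> \<phi> \<Longrightarrow> unguarded X (subst_fml \<theta> \<phi>) \<Longrightarrow> \<exists>Y. unguarded Y \<phi> \<and> unguarded X (\<theta> Y)"
proof (induction \<phi> arbitrary: \<theta>)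
  case (MinF Z \<phi>)
  then obtain Y where "unguarded Y \<phi>" "unguarded X ((\<theta>(Z := Var Z)) Y)" "X \<noteq> Z"
    using capture_free_binder(1) by fastforce
  then show ?case by (auto split: if_splits)
next
  case (MaxF Z \<phi>)
  then obtain Y where "unguarded Y \<phi>" "unguarded X ((\<theta>(Z := Var Z)) Y)" "X \<noteq> Z"
    using capture_free_binder(2) by fastforce
  then show ?case by (auto split: if_splits)
next
  case (Or \<phi> \<psi>)
  have "capture_free \<theta> \<phi>" "capture_free \<theta> \<psi>" using Or.prems(1) by (auto simp: capture_free_def)
  with Or.IH Or.prems(2) show ?case by auto
next
  case (And \<phi> \<psi>)
  have "capture_free \<theta> \<phi>" "capture_free \<theta> \<psi>" using And.prems(1) by (auto simp: capture_free_def)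
  with And.IH And.prems(2) show ?case by auto
qed auto

lemma not_unguarded_subst_fml_binder:
  assumes "\<not> unguarded Z \<phi>" and "\<forall>Y\<in>fv \<phi> - {Z}. fv (\<theta> Y) = {} \<or> \<theta> Y = Var Y"
  shows "\<not> unguarded Z (subst_fml (\<theta>(Z := Var Z)) \<phi>)"
proof
  assume "unguarded Z (subst_fml (\<theta>(Z := Var Z)) \<phi>)"
  moreover have "capture_free (\<theta>(Z := Var Z)) \<phi>"
    using assms(2) by (simp add: capture_free_def)
  ultimately obtain Y where Y: "unguarded Y \<phi>" "unguarded Z ((\<theta>(Z := Var Z)) Y)"
    using unguarded_subst_fml by blast
  with assms(1) have "Y \<noteq> Z" by auto
  with Y assms(2) unguarded_fv show False by fastforce
qed

lemma guarded_subst_fml: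
  "guarded \<phi> \<Longrightarrow> \<forall>Y\<in>fv \<phi>. fv (\<theta> Y) = {} \<and> guarded (\<theta> Y) \<or> \<theta> Y = Var Y \<Longrightarrow> guarded (subst_fml \<theta> \<phi>)"
proof (induction \<phi> arbitrary: \<theta>)
  case (MinF Z \<phi>)
  then have "\<not> unguarded Z (subst_fml (\<theta>(Z := Var Z)) \<phi>)"
    by (intro not_unguarded_subst_fml_binder) auto
  with MinF show ?case by simp
next
  case (MaxF Z \<phi>)
  then have "\<not> unguarded Z (subst_fml (\<theta>(Z := Var Z)) \<phi>)"
    by (intro not_unguarded_subst_fml_binder) auto
  with MaxF show ?case by simp
qed auto

text \<open>The number of connectives above the modalities. Unfolding a guarded fixpoint
  only substitutes below modalities, so it decreases this measure.\<close>
primrec unguarded_size :: "'a fml \<Rightarrow> nat" where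
  "unguarded_size TT = 1"
| "unguarded_size FF = 1"
| "unguarded_size (Or \<phi> \<psi>) = unguarded_size \<phi> + unguarded_size \<psi> + 1"
| "unguarded_size (And \<phi> \<psi>) = unguarded_size \<phi> + unguarded_size \<psi> + 1"
| "unguarded_size (Dia A \<phi>) = 1"
| "unguarded_size (Box A \<phi>) = 1"
| "unguarded_size (MinF X \<phi>) = unguarded_size \<phi> + 1"
| "unguarded_size (MaxF X \<phi>) = unguarded_size \<phi> + 1"
| "unguarded_size (Var X) = 1"

lemma unguarded_size_subst_fml:
  "\<forall>Y. unguarded Y \<phi> \<longrightarrow> \<theta> Y = Var Y \<Longrightarrow> unguarded_size (subst_fml \<theta> \<phi>) = unguarded_size \<phi>"
proof (induction \<phi> arbitrary: \<theta>)
  case (MinF X \<phi>)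
  then have "unguarded_size (subst_fml (\<theta>(X := Var X)) \<phi>) = unguarded_size \<phi>" by (intro MinF.IH) auto
  then show ?case by simp
next
  case (MaxF X \<phi>)
  then have "unguarded_size (subst_fml (\<theta>(X := Var X)) \<phi>) = unguarded_size \<phi>" by (intro MaxF.IH) auto
  then show ?case by simp
qed auto

section \<open>Finfinite traces\<close>

fun tappend :: "'a list \<Rightarrow> 'a ftrace \<Rightarrow> 'a ftrace" where
  "tappend [] g = g"
| "tappend (a # s) g = tcons a (tappend s g)"

lemma is_prefix_Nil [simp]: "is_prefix [] g"
  by (cases g) auto

lemma tcons_eq_FinT_iff: "tcons a g = FinT l \<longleftrightarrow> (\<exists>l'. l = a # l' \<and> g = FinT l')"
  by (cases g) auto

lemma tcons_eq_InfT_iff: "tcons a g = InfT f \<longleftrightarrow> f 0 = a \<and> g = InfT (\<lambda>i. f (Suc i))"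
  by (cases g) (auto simp: fun_eq_iff split: nat.split)

lemma tcons_eq_tcons_iff: "tcons a g = tcons b h \<longleftrightarrow> a = b \<and> g = h"
  by (cases h) (auto simp: tcons_eq_FinT_iff tcons_eq_InfT_iff)

lemma is_prefix_Cons: "is_prefix (a # s) g \<longleftrightarrow> (\<exists>g'. g = tcons a g' \<and> is_prefix s g')"
proof (cases g)
  case (FinT l)
  then show ?thesis by (cases l) (auto simp: eq_commute[of "FinT _"] tcons_eq_FinT_iff)
next
  case (InfT f)
  then show ?thesis
    by (auto simp: eq_commute[of "InfT _"] tcons_eq_InfT_iff map_upt_Suc simp del: upt_Suc)
qed

lemma is_prefix_tcons: "is_prefix s g \<Longrightarrow> is_prefix (a # s) (tcons a g)"
  by (auto simp: is_prefix_Cons)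

lemma is_prefix_tappend: "is_prefix s g \<Longrightarrow> \<exists>g'. g = tappend s g'"
  by (induction s arbitrary: g) (auto simp: is_prefix_Cons)

lemma is_prefix_comparable:
  "is_prefix s g \<Longrightarrow> is_prefix t g \<Longrightarrow> length s \<le> length t \<Longrightarrow> \<exists>u. t = s @ u"
proof (induction s arbitrary: t g)
  case (Cons a s)
  then obtain b t' where "t = b # t'" by (cases t) auto
  with Cons show ?case by (auto simp: is_prefix_Cons tcons_eq_tcons_iff)
qed simp

inductive_cases step_MConjE: "step (MConj m n) \<mu> m'"
inductive_cases step_MDisjE: "step (MDisj m n) \<mu> m'"

lemma step_Pre_iff: "step (Pre a m) \<mu> m' \<longleftrightarrow> \<mu> = Some a \<and> m' = m"
  by (auto elim: step.cases intro: step.intros)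

lemma step_Plus_iff: "step (Plus m n) \<mu> m' \<longleftrightarrow> step m \<mu> m' \<or> step n \<mu> m'"
  by (auto elim: step.cases intro: step.intros)

lemma step_Rec_iff: "step (Rec x m) \<mu> m' \<longleftrightarrow> \<mu> = None \<and> m' = msubst m x (Rec x m)"
  by (auto elim: step.cases intro: step.intros)

lemma step_Verd_iff: "step (Verd v) \<mu> m' \<longleftrightarrow> (\<exists>a. \<mu> = Some a \<and> m' = Verd v)"
  by (auto elim: step.cases intro: step.intros)

lemma step_sum_list_mon:
  "ms \<noteq> [] \<Longrightarrow> step (sum_list_mon ms) \<mu> m' \<longleftrightarrow> (\<exists>m\<in>set ms. step m \<mu> m')"
  by (induction ms rule: sum_list_mon.induct) (auto simp: step_Plus_iff)

lemma set_enum_set: "set (enum_set (A :: 'a :: finite set)) = A"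
  unfolding enum_set_def by (rule someI2_ex[OF finite_distinct_list]) auto

lemma guard_sum_summands_nonempty:
  "map (\<lambda>a. Pre a n) (enum_set (A :: 'a :: finite set)) @ map (\<lambda>a. Pre a r) (enum_set (- A)) \<noteq> []"
  using set_enum_set[of A] set_enum_set[of "- A"] by auto

lemma step_guard_sum_iff:
  "step (guard_sum (A :: 'a :: finite set) n r) \<mu> m' \<longleftrightarrow>
     (\<exists>a. \<mu> = Some a \<and> (a \<in> A \<and> m' = n \<or> a \<notin> A \<and> m' = r))"
  unfolding guard_sum_def step_sum_list_mon[OF guard_sum_summands_nonempty]
  by (auto simp: set_enum_set step_Pre_iff intro: sAct)

lemma sum_list_mon_Pre_neq_Verd:
  "ms \<noteq> [] \<Longrightarrow> \<forall>m\<in>set ms. \<exists>a n. m = Pre a n \<Longrightarrow> sum_list_mon ms \<noteq> Verd v"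
  by (induction ms rule: sum_list_mon.induct) auto

lemma guard_sum_neq_Verd: "guard_sum (A :: 'a :: finite set) n r \<noteq> Verd v"
  unfolding guard_sum_def by (rule sum_list_mon_Pre_neq_Verd[OF guard_sum_summands_nonempty]) auto

lemma synth_eq_Verd_iff: "synth \<psi> = Verd v \<longleftrightarrow> \<psi> = TT \<and> v = VYes \<or> \<psi> = FF \<and> v = VNo"
  by (cases \<psi>) (auto simp: guard_sum_neq_Verd)

primrec subst_mon :: "(nat \<Rightarrow> 'a mon) \<Rightarrow> 'a mon \<Rightarrow> 'a mon" where
  "subst_mon \<rho> (Verd v) = Verd v"
| "subst_mon \<rho> (Pre a m) = Pre a (subst_mon \<rho> m)"
| "subst_mon \<rho> (Plus m n) = Plus (subst_mon \<rho> m) (subst_mon \<rho> n)"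
| "subst_mon \<rho> (Rec y m) = Rec y (subst_mon (\<rho>(y := MVar y)) m)"
| "subst_mon \<rho> (MVar y) = \<rho> y"
| "subst_mon \<rho> (MConj m n) = MConj (subst_mon \<rho> m) (subst_mon \<rho> n)"
| "subst_mon \<rho> (MDisj m n) = MDisj (subst_mon \<rho> m) (subst_mon \<rho> n)"

lemma subst_mon_MVar [simp]: "subst_mon MVar m = m"
  by (induction m) auto

lemma msubst_eq_subst_mon: "msubst m x n = subst_mon (MVar(x := n)) m"
proof (induction m)
  case (Rec y m)
  have "(MVar(x := n))(y := MVar y) = (if x = y then MVar else MVar(x := n))"
    by (auto simp: fun_eq_iff)
  with Rec show ?case by (metis msubst.simps(4) subst_mon.simps(4) subst_mon_MVar)
qed auto

lemma subst_mon_guard_sum: "subst_mon \<rho> (guard_sum A n r) = guard_sum A (subst_mon \<rho> n) (subst_mon \<rho> r)"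
proof -
  have "subst_mon \<rho> (sum_list_mon ms) = sum_list_mon (map (subst_mon \<rho>) ms)" for ms
    by (induction ms rule: sum_list_mon.induct) auto
  then show ?thesis by (simp add: guard_sum_def comp_def)
qed

lemma synth_subst_fml: "synth (subst_fml \<theta> \<phi>) = subst_mon (synth \<circ> \<theta>) (synth \<phi>)"
  by (induction \<phi> arbitrary: \<theta>) (auto simp: subst_mon_guard_sum fun_upd_comp)

lemma step_synth_fixpoint_iff:
  assumes "\<psi> \<in> {MinF X \<phi>, MaxF X \<phi>}"
  shows "step (synth \<psi>) \<mu> m' \<longleftrightarrow> \<mu> = None \<and> m' = synth (subst_fml (Var(X := \<psi>)) \<phi>)"
proof -
  have "synth \<circ> Var(X := \<psi>) = MVar(X := Rec X (synth \<phi>))"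
    using assms by (auto simp: fun_eq_iff)
  with assms show ?thesis
    by (auto simp: step_Rec_iff msubst_eq_subst_mon synth_subst_fml)
qed

lemma closed_fixpoint_unfolding:
  assumes fixpoint: "\<psi> \<in> {MinF X \<phi>, MaxF X \<phi>}" and closed: "fv \<psi> = {}"
  shows "fv (subst_fml (Var(X := \<psi>)) \<phi>) = {}" and "semF (subst_fml (Var(X := \<psi>)) \<phi>) = semF \<psi>"
proof -
  from fixpoint closed show "fv (subst_fml (Var(X := \<psi>)) \<phi>) = {}"
    by (intro closed_subst_fml) auto
  from fixpoint closed show "semF (subst_fml (Var(X := \<psi>)) \<phi>) = semF \<psi>"
    by (auto simp: semF_def sem_MinF_unfold sem_MaxF_unfold)
qed

lemma guarded_fixpoint_unfolding:
  assumes fixpoint: "\<psi> \<in> {MinF X \<phi>, MaxF X \<phi>}" and "fv \<psi> = {}" and "guarded \<psi>"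
  shows "guarded (subst_fml (Var(X := \<psi>)) \<phi>)"
    and "unguarded_size (subst_fml (Var(X := \<psi>)) \<phi>) < unguarded_size \<psi>"
proof -
  have "guarded \<phi>" "\<not> unguarded X \<phi>"
    using fixpoint \<open>guarded \<psi>\<close> by auto
  with assms show "guarded (subst_fml (Var(X := \<psi>)) \<phi>)"
    by (intro guarded_subst_fml) auto
  have "unguarded_size (subst_fml (Var(X := \<psi>)) \<phi>) = unguarded_size \<phi>"
    using \<open>\<not> unguarded X \<phi>\<close> by (intro unguarded_size_subst_fml) auto
  with fixpoint show "unguarded_size (subst_fml (Var(X := \<psi>)) \<phi>) < unguarded_size \<psi>" by auto
qed

section \<open>Soundness\<close>

lemma semF_simps [simp]:
  "semF TT = UNIV" "semF FF = {}"
  "semF (Or \<phi> \<psi>) = semF \<phi> \<union> semF \<psi>" "semF (And \<phi> \<psi>) = semF \<phi> \<inter> semF \<psi>"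
  "semF (Dia A \<phi>) = {tcons a g | a g. a \<in> A \<and> g \<in> semF \<phi>}"
  "semF (Box A \<phi>) = {g. \<forall>a\<in>A. \<forall>g'. g = tcons a g' \<longrightarrow> g' \<in> semF \<phi>}"
  by (simp_all add: semF_def)

fun derivative :: "'a option \<Rightarrow> 'a ftrace set \<Rightarrow> 'a ftrace set" where
  "derivative None S = S"
| "derivative (Some a) S = {g. tcons a g \<in> S}"

lemma derivative_Int [simp]: "derivative \<mu> (S \<inter> T) = derivative \<mu> S \<inter> derivative \<mu> T"
  by (cases \<mu>) auto

lemma derivative_Un [simp]: "derivative \<mu> (S \<union> T) = derivative \<mu> S \<union> derivative \<mu> T"
  by (cases \<mu>) auto

text \<open>The invariant of the soundness proof: monitors reachable from a synthesised monitor are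
  again synthesised, from a closed formula denoting the corresponding derivative.\<close>
definition is_synth_of :: "('a :: finite) mon \<Rightarrow> 'a ftrace set \<Rightarrow> bool" where
  "is_synth_of m S \<longleftrightarrow> (\<exists>\<psi>. m = synth \<psi> \<and> fv \<psi> = {} \<and> semF \<psi> = S)"

lemma is_synth_of_synth: "fv \<psi> = {} \<Longrightarrow> is_synth_of (synth \<psi>) (semF \<psi>)"
  by (auto simp: is_synth_of_def)

lemma is_synth_of_verdicts:
  "is_synth_of (Verd VYes) UNIV" "is_synth_of (Verd VNo) {}"
  using is_synth_of_synth[of TT] is_synth_of_synth[of FF] by simp_all

lemma is_synth_of_VerdD:
  "is_synth_of (Verd VYes) S \<Longrightarrow> S = UNIV" "is_synth_of (Verd VNo) S \<Longrightarrow> S = {}"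
  by (auto simp: is_synth_of_def synth_eq_Verd_iff dest!: sym[of "Verd _"])

lemma is_synth_of_MConj: "is_synth_of m S \<Longrightarrow> is_synth_of n T \<Longrightarrow> is_synth_of (MConj m n) (S \<inter> T)"
  unfolding is_synth_of_def by (metis Un_empty fv.simps(4) semF_simps(4) synth.simps(4))

lemma is_synth_of_MDisj: "is_synth_of m S \<Longrightarrow> is_synth_of n T \<Longrightarrow> is_synth_of (MDisj m n) (S \<union> T)"
  unfolding is_synth_of_def by (metis Un_empty fv.simps(3) semF_simps(3) synth.simps(5))

lemma step_synth_fixpoint_is_synth_of:
  assumes "\<psi> \<in> {MinF X \<phi>, MaxF X \<phi>}" "fv \<psi> = {}" "step (synth \<psi>) \<mu> m'"
  shows "is_synth_of m' (derivative \<mu> (semF \<psi>))"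
proof -
  have "\<mu> = None" "m' = synth (subst_fml (Var(X := \<psi>)) \<phi>)"
    using assms(3) by (simp_all add: step_synth_fixpoint_iff[OF assms(1)])
  with closed_fixpoint_unfolding[OF assms(1,2)] show ?thesis
    by (metis is_synth_of_synth derivative.simps(1))
qed

lemma step_synth_is_synth_of:
  "fv \<psi> = {} \<Longrightarrow> step (synth \<psi>) \<mu> m' \<Longrightarrow> is_synth_of m' (derivative \<mu> (semF \<psi>))"
proof (induction \<psi> arbitrary: \<mu> m')
  case (And \<phi> \<psi>)
  then have closed: "fv \<phi> = {}" "fv \<psi> = {}" by auto
  with And.IH have IH: "step (synth \<phi>) \<mu> m \<Longrightarrow> is_synth_of m (derivative \<mu> (semF \<phi>))"
    "step (synth \<psi>) \<mu> m \<Longrightarrow> is_synth_of m (derivative \<mu> (semF \<psi>))" for \<mu> m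
    by auto
  from And.prems(2) show ?case
    by (auto elim!: step_MConjE dest: IH intro!: is_synth_of_MConj is_synth_of_synth
        simp: synth_eq_Verd_iff is_synth_of_verdicts closed)
next
  case (Or \<phi> \<psi>)
  then have closed: "fv \<phi> = {}" "fv \<psi> = {}" by auto
  with Or.IH have IH: "step (synth \<phi>) \<mu> m \<Longrightarrow> is_synth_of m (derivative \<mu> (semF \<phi>))"
    "step (synth \<psi>) \<mu> m \<Longrightarrow> is_synth_of m (derivative \<mu> (semF \<psi>))" for \<mu> m
    by auto
  from Or.prems(2) show ?case
    by (auto elim!: step_MDisjE dest: IH intro!: is_synth_of_MDisj is_synth_of_synth
        simp: synth_eq_Verd_iff is_synth_of_verdicts closed)
next
  case (Dia A \<phi>)
  then show ?case
    by (auto simp: step_guard_sum_iff tcons_eq_tcons_iff is_synth_of_verdicts intro!: is_synth_of_synth)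
next
  case (Box A \<phi>)
  then show ?case
    by (auto simp: step_guard_sum_iff tcons_eq_tcons_iff is_synth_of_verdicts intro!: is_synth_of_synth)
next
  case (MinF X \<phi>)
  then show ?case using step_synth_fixpoint_is_synth_of[of "MinF X \<phi>" X \<phi>] by blast
next
  case (MaxF X \<phi>)
  then show ?case using step_synth_fixpoint_is_synth_of[of "MaxF X \<phi>" X \<phi>] by blast
qed (auto simp: step_Verd_iff is_synth_of_verdicts)

lemma step_is_synth_of: "is_synth_of m S \<Longrightarrow> step m \<mu> m' \<Longrightarrow> is_synth_of m' (derivative \<mu> S)"
  unfolding is_synth_of_def using step_synth_is_synth_of is_synth_of_def by blast

lemma tau_star_is_synth_of: "tau_star m m' \<Longrightarrow> is_synth_of m S \<Longrightarrow> is_synth_of m' S"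
  unfolding tau_star_def
  by (induction rule: rtranclp_induct) (auto dest: step_is_synth_of)

lemma weak_trace_is_synth_of:
  "weak_trace m s m' \<Longrightarrow> is_synth_of m S \<Longrightarrow> is_synth_of m' {g. tappend s g \<in> S}"
proof (induction s arbitrary: m S)
  case (Cons a s)
  then obtain m1 m2 m3 where "tau_star m m1" "step m1 (Some a) m2" "tau_star m2 m3" "weak_trace m3 s m'"
    by (auto simp: weak_step_def)
  with Cons.prems have "is_synth_of m3 (derivative (Some a) S)"
    by (meson step_is_synth_of tau_star_is_synth_of)
  with Cons.IH \<open>weak_trace m3 s m'\<close> show ?case by fastforce
qed (simp add: tau_star_is_synth_of)

theorem synth_sound: "fv \<phi> = {} \<Longrightarrow> sound (synth \<phi>) \<phi>"
proof -
  assume "fv \<phi> = {}"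
  have verdict: "is_synth_of (Verd v) {g. tappend s g \<in> semF \<phi>}"
    if "weak_trace (synth \<phi>) s (Verd v)" for s v
    using weak_trace_is_synth_of[OF that is_synth_of_synth[OF \<open>fv \<phi> = {}\<close>]] .
  show ?thesis
    unfolding sound_def rejects_def accepts_def
    by (auto dest!: verdict is_synth_of_VerdD is_prefix_tappend)
qed

section \<open>Weak transitions and verdicts\<close>

lemma tau_star_refl [simp]: "tau_star m m"
  by (simp add: tau_star_def)

lemma tau_star_trans: "tau_star m1 m2 \<Longrightarrow> tau_star m2 m3 \<Longrightarrow> tau_star m1 m3"
  unfolding tau_star_def by (rule rtranclp_trans)

lemma tau_star_step: "step m None m' \<Longrightarrow> tau_star m m'"
  unfolding tau_star_def by (rule r_into_rtranclp)

lemma tau_star_parallel: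
  assumes "C \<in> {MConj, MDisj}" "tau_star m m'" "tau_star n n'"
  shows "tau_star (C m n) (C m' n')"
proof -
  have lift: "tau_star (D k) (D k')"
    if "\<And>k k'. step k None k' \<Longrightarrow> step (D k) None (D k')" "tau_star k k'" for D :: "'a mon \<Rightarrow> 'a mon" and k k'
    using that(2) unfolding tau_star_def
    by (induction rule: rtranclp_induct) (auto intro: rtranclp.rtrancl_into_rtrancl that(1))
  have "step k None k' \<Longrightarrow> step (C k n) None (C k' n)"
    and "step k None k' \<Longrightarrow> step (C m' k) None (C m' k')" for k k'
    using assms(1) by (auto intro: sTauConjL sTauConjR sTauDisjL sTauDisjR)
  then have "tau_star (C m n) (C m' n)" "tau_star (C m' n) (C m' n')"
    using lift[of "\<lambda>k. C k n", OF _ assms(2)] lift[of "C m'", OF _ assms(3)] by blast+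
  then show ?thesis by (rule tau_star_trans)
qed

lemma weak_step_of_step: "step m (Some a) m' \<Longrightarrow> weak_step m a m'"
  unfolding weak_step_def using tau_star_refl by blast

lemma tau_star_weak_step: "tau_star m m1 \<Longrightarrow> weak_step m1 a m' \<Longrightarrow> weak_step m a m'"
  unfolding weak_step_def by (blast intro: tau_star_trans)

lemma weak_step_parallel:
  "C \<in> {MConj, MDisj} \<Longrightarrow> weak_step m a m' \<Longrightarrow> weak_step n a n' \<Longrightarrow> weak_step (C m n) a (C m' n')"
  unfolding weak_step_def by (blast intro: tau_star_parallel sParConj sParDisj)

lemma weak_trace_parallel:
  "C \<in> {MConj, MDisj} \<Longrightarrow> weak_trace m s m' \<Longrightarrow> weak_trace n s n' \<Longrightarrow> weak_trace (C m n) s (C m' n')"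
  by (induction s arbitrary: m n) (auto intro: tau_star_parallel weak_step_parallel)

lemma weak_trace_tau_star: "weak_trace m s m1 \<Longrightarrow> tau_star m1 m2 \<Longrightarrow> weak_trace m s m2"
  by (induction s arbitrary: m) (auto intro: tau_star_trans)

lemma tau_star_weak_trace: "tau_star m m1 \<Longrightarrow> weak_trace m1 s m' \<Longrightarrow> weak_trace m s m'"
  by (cases s) (auto simp: weak_step_def intro: tau_star_trans)

lemma weak_trace_Verd: "weak_trace (Verd v) s (Verd v)"
  by (induction s) (auto intro!: weak_step_of_step sVerd)

lemma weak_trace_append_Verd: "weak_trace m s (Verd v) \<Longrightarrow> weak_trace m (s @ t) (Verd v)"
  by (induction s arbitrary: m) (auto intro: tau_star_weak_trace weak_trace_Verd)

definition trace_total :: "'a mon \<Rightarrow> bool" where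
  "trace_total m \<longleftrightarrow> (\<forall>s. \<exists>m'. weak_trace m s m')"

definition reaches :: "'a mon \<Rightarrow> verdict \<Rightarrow> 'a ftrace \<Rightarrow> bool" where
  "reaches m v g \<longleftrightarrow> (\<exists>s. is_prefix s g \<and> weak_trace m s (Verd v))"

lemma rejects_iff_reaches: "rejects m g \<longleftrightarrow> reaches m VNo g"
  and accepts_iff_reaches: "accepts m g \<longleftrightarrow> reaches m VYes g"
  by (simp_all add: rejects_def accepts_def reaches_def)

lemma reaches_Verd: "reaches (Verd v) v g"
  unfolding reaches_def by (auto intro: exI[of _ "[]"])

lemma tau_star_reaches: "tau_star m m' \<Longrightarrow> reaches m' v g \<Longrightarrow> reaches m v g"
  unfolding reaches_def by (blast intro: tau_star_weak_trace)

lemma weak_step_reaches: "weak_step m a m' \<Longrightarrow> reaches m' v g \<Longrightarrow> reaches m v (tcons a g)"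
  unfolding reaches_def by (metis is_prefix_tcons weak_trace.simps(2))

lemma reaches_same_prefix:
  assumes "reaches m v g" "reaches n v g"
  obtains s where "is_prefix s g" "weak_trace m s (Verd v)" "weak_trace n s (Verd v)"
proof -
  obtain s t where s: "is_prefix s g" "weak_trace m s (Verd v)"
    and t: "is_prefix t g" "weak_trace n t (Verd v)"
    using assms unfolding reaches_def by blast
  show thesis
  proof (cases "length s \<le> length t")
    case True
    then obtain u where "t = s @ u" using is_prefix_comparable s(1) t(1) by blast
    with s t weak_trace_append_Verd show thesis by (intro that[of t]) auto
  next
    case False
    then obtain u where "s = t @ u" using is_prefix_comparable s(1) t(1) by fastforce
    with s t weak_trace_append_Verd show thesis by (intro that[of s]) auto
  qed
qed

lemma reaches_parallel_left:
  assumes "C \<in> {MConj, MDisj}" "reaches m v g" "trace_total n"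
    and "\<And>n'. step (C (Verd v) n') None (Verd w)"
  shows "reaches (C m n) w g"
  using assms unfolding reaches_def trace_total_def
  by (meson tau_star_step weak_trace_parallel weak_trace_tau_star)

lemma reaches_parallel_right:
  assumes "C \<in> {MConj, MDisj}" "trace_total m" "reaches n v g"
    and "\<And>m'. step (C m' (Verd v)) None (Verd w)"
  shows "reaches (C m n) w g"
  using assms unfolding reaches_def trace_total_def
  by (meson tau_star_step weak_trace_parallel weak_trace_tau_star)

lemma reaches_parallel_both:
  assumes "C \<in> {MConj, MDisj}" "reaches m v g" "reaches n v g"
    and "step (C (Verd v) (Verd v)) None (Verd v)"
  shows "reaches (C m n) v g"
  using assms(2,3)
proof (rule reaches_same_prefix)
  fix s assume "is_prefix s g" "weak_trace m s (Verd v)" "weak_trace n s (Verd v)"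
  with assms(1,4) show ?thesis
    unfolding reaches_def by (meson tau_star_step weak_trace_parallel weak_trace_tau_star)
qed

section \<open>Synthesised monitors never block\<close>

lemma weak_step_synth_closed_guarded:
  fixes \<psi> :: "('a :: finite) fml"
  assumes "fv \<psi> = {}" "guarded \<psi>"
  shows "\<exists>\<psi>'. weak_step (synth \<psi>) a (synth \<psi>') \<and> fv \<psi>' = {} \<and> guarded \<psi>'"
  using assms
proof (induction \<psi> rule: measure_induct_rule[of unguarded_size])
  case (less \<psi>)
  show ?case
  proof (cases "\<exists>X \<phi>. \<psi> \<in> {MinF X \<phi>, MaxF X \<phi>}")
    case True
    then obtain X \<phi> where fixpoint: "\<psi> \<in> {MinF X \<phi>, MaxF X \<phi>}" by blast
    let ?\<phi>' = "subst_fml (Var(X := \<psi>)) \<phi>"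
    have "tau_star (synth \<psi>) (synth ?\<phi>')"
      by (simp add: tau_star_step step_synth_fixpoint_iff[OF fixpoint])
    moreover obtain \<psi>' where "weak_step (synth ?\<phi>') a (synth \<psi>')" "fv \<psi>' = {}" "guarded \<psi>'"
      using less closed_fixpoint_unfolding[OF fixpoint] guarded_fixpoint_unfolding[OF fixpoint] by blast
    ultimately show ?thesis by (meson tau_star_weak_step)
  next
    case False
    then show ?thesis
    proof (cases \<psi>)
      case (And \<phi>1 \<phi>2)
      obtain \<phi>1' \<phi>2' where
        "weak_step (synth \<phi>1) a (synth \<phi>1') \<and> fv \<phi>1' = {} \<and> guarded \<phi>1'"
        "weak_step (synth \<phi>2) a (synth \<phi>2') \<and> fv \<phi>2' = {} \<and> guarded \<phi>2'"
        using less.IH[of \<phi>1] less.IH[of \<phi>2] less.prems And by auto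
      with And show ?thesis
        by (intro exI[of _ "And \<phi>1' \<phi>2'"]) (auto intro: weak_step_parallel)
    next
      case (Or \<phi>1 \<phi>2)
      obtain \<phi>1' \<phi>2' where
        "weak_step (synth \<phi>1) a (synth \<phi>1') \<and> fv \<phi>1' = {} \<and> guarded \<phi>1'"
        "weak_step (synth \<phi>2) a (synth \<phi>2') \<and> fv \<phi>2' = {} \<and> guarded \<phi>2'"
        using less.IH[of \<phi>1] less.IH[of \<phi>2] less.prems Or by auto
      with Or show ?thesis
        by (intro exI[of _ "Or \<phi>1' \<phi>2'"]) (auto intro: weak_step_parallel)
    next
      case (Dia A \<phi>)
      then have "weak_step (synth \<psi>) a (synth (if a \<in> A then \<phi> else FF))"
        by (auto intro!: weak_step_of_step simp: step_guard_sum_iff)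
      with less.prems Dia show ?thesis
        by (intro exI[of _ "if a \<in> A then \<phi> else FF"]) auto
    next
      case (Box A \<phi>)
      then have "weak_step (synth \<psi>) a (synth (if a \<in> A then \<phi> else TT))"
        by (auto intro!: weak_step_of_step simp: step_guard_sum_iff)
      with less.prems Box show ?thesis
        by (intro exI[of _ "if a \<in> A then \<phi> else TT"]) auto
    next
      case TT
      then show ?thesis by (intro exI[of _ TT]) (auto intro: weak_step_of_step sVerd)
    next
      case FF
      then show ?thesis by (intro exI[of _ FF]) (auto intro: weak_step_of_step sVerd)
    qed (use less.prems False in auto)
  qed
qed

lemma trace_total_synth: "fv \<psi> = {} \<Longrightarrow> guarded \<psi> \<Longrightarrow> trace_total (synth (\<psi> :: ('a :: finite) fml))"
proof -
  have "fv \<psi> = {} \<Longrightarrow> guarded \<psi> \<Longrightarrow> \<exists>m'. weak_trace (synth \<psi>) s m'" for s and \<psi> :: "'a fml"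
  proof (induction s arbitrary: \<psi>)
    case (Cons a s)
    then obtain \<psi>' where "weak_step (synth \<psi>) a (synth \<psi>')" "fv \<psi>' = {}" "guarded \<psi>'"
      using weak_step_synth_closed_guarded by blast
    with Cons.IH show ?case by (meson weak_trace.simps(2))
  qed (meson tau_star_refl weak_trace.simps(1))
  then show "fv \<psi> = {} \<Longrightarrow> guarded \<psi> \<Longrightarrow> trace_total (synth \<psi>)"
    by (simp add: trace_total_def)
qed

section \<open>Completeness\<close>

lemma closed_guarded_subst_fml:
  "guarded \<phi> \<Longrightarrow> \<forall>Y\<in>fv \<phi>. fv (\<theta> Y) = {} \<and> guarded (\<theta> Y) \<Longrightarrow>
    fv (subst_fml \<theta> \<phi>) = {} \<and> guarded (subst_fml \<theta> \<phi>)"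
  by (auto intro!: closed_subst_fml guarded_subst_fml)

lemma trace_total_synth_subst_fml:
  "guarded \<phi> \<Longrightarrow> \<forall>Y\<in>fv \<phi>. fv (\<theta> Y) = {} \<and> guarded (\<theta> Y) \<Longrightarrow>
    trace_total (synth (subst_fml \<theta> (\<phi> :: ('a :: finite) fml)))"
  using closed_guarded_subst_fml trace_total_synth by blast

lemma step_synth_subst_fixpoint:
  assumes "M \<in> {subst_fml \<theta> (MinF X \<phi>), subst_fml \<theta> (MaxF X \<phi>)}" "\<forall>Y\<in>fv \<phi> - {X}. fv (\<theta> Y) = {}"
  shows "step (synth M) None (synth (subst_fml (\<theta>(X := M)) \<phi>))"
proof -
  have "M \<in> {MinF X (subst_fml (\<theta>(X := Var X)) \<phi>), MaxF X (subst_fml (\<theta>(X := Var X)) \<phi>)}"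
    using assms(1) by auto
  then show ?thesis
    using subst_fml_binder_body[OF assms(2), of M] by (simp add: step_synth_fixpoint_iff)
qed

lemma not_rejects_synth_subst_fml:
  fixes \<phi> :: "('a :: finite) fml"
  assumes "sHML \<phi>" "guarded \<phi>" "\<forall>Y\<in>fv \<phi>. fv (\<theta> Y) = {} \<and> guarded (\<theta> Y)"
    and "\<not> rejects (synth (subst_fml \<theta> \<phi>)) g"
  shows "g \<in> sem \<phi> (\<lambda>Y. {h. \<not> rejects (synth (\<theta> Y)) h})"
  using assms
proof (induction \<phi> arbitrary: \<theta> g)
  case FF
  then show ?case by (simp add: rejects_iff_reaches reaches_Verd)
next
  case (And \<phi>1 \<phi>2)
  then have "trace_total (synth (subst_fml \<theta> \<phi>1))" "trace_total (synth (subst_fml \<theta> \<phi>2))"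
    by (auto intro!: trace_total_synth_subst_fml)
  with And.prems(4) have "\<not> rejects (synth (subst_fml \<theta> \<phi>1)) g" "\<not> rejects (synth (subst_fml \<theta> \<phi>2)) g"
    unfolding rejects_iff_reaches subst_fml.simps synth.simps
    by (meson insertI1 reaches_parallel_left reaches_parallel_right sNoConjL sNoConjR)+
  with And show ?case by auto
next
  case (Or \<phi>1 \<phi>2)
  show ?case
  proof (rule ccontr)
    assume "g \<notin> sem (Or \<phi>1 \<phi>2) (\<lambda>Y. {h. \<not> rejects (synth (\<theta> Y)) h})"
    with Or.IH[of \<theta> g] Or.prems
    have "reaches (synth (subst_fml \<theta> \<phi>1)) VNo g" "reaches (synth (subst_fml \<theta> \<phi>2)) VNo g"
      unfolding rejects_iff_reaches by auto
    then have "reaches (synth (subst_fml \<theta> (Or \<phi>1 \<phi>2))) VNo g"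
      by (auto intro: reaches_parallel_both sNoDisjL)
    with Or.prems(4) show False by (simp add: rejects_iff_reaches)
  qed
next
  case (Box A \<phi>)
  have "g' \<in> sem \<phi> (\<lambda>Y. {h. \<not> rejects (synth (\<theta> Y)) h})" if "a \<in> A" "g = tcons a g'" for a g'
  proof -
    have "weak_step (synth (subst_fml \<theta> (Box A \<phi>))) a (synth (subst_fml \<theta> \<phi>))"
      using \<open>a \<in> A\<close> by (auto intro!: weak_step_of_step simp: step_guard_sum_iff)
    with Box.prems(4) \<open>g = tcons a g'\<close> have "\<not> rejects (synth (subst_fml \<theta> \<phi>)) g'"
      unfolding rejects_iff_reaches by (auto dest: weak_step_reaches)
    with Box show ?thesis by auto
  qed
  then show ?case by auto
next
  case (MaxF X \<phi>)
  let ?\<sigma> = "\<lambda>Y. {h. \<not> rejects (synth (\<theta> Y)) h}"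
  define M where "M = subst_fml \<theta> (MaxF X \<phi>)"
  define S where "S = {h. \<not> rejects (synth M) h}"
  have M: "fv M = {}" "guarded M"
    unfolding M_def using MaxF.prems(2,3) closed_guarded_subst_fml[of "MaxF X \<phi>" \<theta>] by auto
  have step: "step (synth M) None (synth (subst_fml (\<theta>(X := M)) \<phi>))"
    unfolding M_def using MaxF.prems(3) by (intro step_synth_subst_fixpoint) auto
  have "S \<subseteq> sem \<phi> (?\<sigma>(X := S))"
  proof
    fix h assume "h \<in> S"
    with step have unfolded: "\<not> rejects (synth (subst_fml (\<theta>(X := M)) \<phi>)) h"
      unfolding S_def rejects_iff_reaches by (auto dest: tau_star_reaches[OF tau_star_step])
    have closing: "\<forall>Y\<in>fv \<phi>. fv ((\<theta>(X := M)) Y) = {} \<and> guarded ((\<theta>(X := M)) Y)"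
      using MaxF.prems(3) M by auto
    have "h \<in> sem \<phi> (\<lambda>Y. {h. \<not> rejects (synth ((\<theta>(X := M)) Y)) h})"
      by (rule MaxF.IH[OF _ _ closing unfolded]) (use MaxF.prems(1,2) in simp_all)
    also have "(\<lambda>Y. {h. \<not> rejects (synth ((\<theta>(X := M)) Y)) h}) = ?\<sigma>(X := S)"
      by (auto simp: S_def fun_eq_iff)
    finally show "h \<in> sem \<phi> (?\<sigma>(X := S))" .
  qed
  moreover have "g \<in> S" using MaxF.prems(4) by (simp add: S_def M_def)
  ultimately show ?case by auto
qed auto

lemma accepts_synth_subst_fml:
  fixes \<phi> :: "('a :: finite) fml"
  assumes "cHML \<phi>" "guarded \<phi>" "\<forall>Y\<in>fv \<phi>. fv (\<theta> Y) = {} \<and> guarded (\<theta> Y)"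
    and "g \<in> sem \<phi> (\<lambda>Y. {h. accepts (synth (\<theta> Y)) h})"
  shows "accepts (synth (subst_fml \<theta> \<phi>)) g"
  using assms
proof (induction \<phi> arbitrary: \<theta> g)
  case TT
  then show ?case by (simp add: accepts_iff_reaches reaches_Verd)
next
  case (And \<phi>1 \<phi>2)
  then have "reaches (synth (subst_fml \<theta> \<phi>1)) VYes g" "reaches (synth (subst_fml \<theta> \<phi>2)) VYes g"
    by (auto simp: accepts_iff_reaches)
  then show ?case
    by (auto simp: accepts_iff_reaches intro: reaches_parallel_both sYesConjL)
next
  case (Or \<phi>1 \<phi>2)
  then have "trace_total (synth (subst_fml \<theta> \<phi>1))" "trace_total (synth (subst_fml \<theta> \<phi>2))"
    by (auto intro!: trace_total_synth_subst_fml)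
  moreover from Or have "reaches (synth (subst_fml \<theta> \<phi>1)) VYes g \<or> reaches (synth (subst_fml \<theta> \<phi>2)) VYes g"
    by (auto simp: accepts_iff_reaches)
  ultimately show ?case
    unfolding accepts_iff_reaches subst_fml.simps synth.simps
    by (meson insertI1 insertI2 reaches_parallel_left reaches_parallel_right sYesDisjL sYesDisjR)
next
  case (Dia A \<phi>)
  then obtain a g' where "a \<in> A" "g = tcons a g'" "g' \<in> sem \<phi> (\<lambda>Y. {h. accepts (synth (\<theta> Y)) h})"
    by auto
  with Dia have "accepts (synth (subst_fml \<theta> \<phi>)) g'" by auto
  moreover have "weak_step (synth (subst_fml \<theta> (Dia A \<phi>))) a (synth (subst_fml \<theta> \<phi>))"
    using \<open>a \<in> A\<close> by (auto intro!: weak_step_of_step simp: step_guard_sum_iff)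
  ultimately show ?case
    using \<open>g = tcons a g'\<close> by (simp add: accepts_iff_reaches weak_step_reaches)
next
  case (MinF X \<phi>)
  let ?\<sigma> = "\<lambda>Y. {h. accepts (synth (\<theta> Y)) h}"
  define M where "M = subst_fml \<theta> (MinF X \<phi>)"
  define S where "S = {h. accepts (synth M) h}"
  have M: "fv M = {}" "guarded M"
    unfolding M_def using MinF.prems(2,3) closed_guarded_subst_fml[of "MinF X \<phi>" \<theta>] by auto
  have step: "step (synth M) None (synth (subst_fml (\<theta>(X := M)) \<phi>))"
    unfolding M_def using MinF.prems(3) by (intro step_synth_subst_fixpoint) auto
  have "sem \<phi> (?\<sigma>(X := S)) \<subseteq> S"
  proof
    fix h assume "h \<in> sem \<phi> (?\<sigma>(X := S))"
    also have "?\<sigma>(X := S) = (\<lambda>Y. {h. accepts (synth ((\<theta>(X := M)) Y)) h})"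
      by (auto simp: S_def fun_eq_iff)
    finally have folded: "h \<in> sem \<phi> (\<lambda>Y. {h. accepts (synth ((\<theta>(X := M)) Y)) h})" .
    have closing: "\<forall>Y\<in>fv \<phi>. fv ((\<theta>(X := M)) Y) = {} \<and> guarded ((\<theta>(X := M)) Y)"
      using MinF.prems(3) M by auto
    have "accepts (synth (subst_fml (\<theta>(X := M)) \<phi>)) h"
      by (rule MinF.IH[OF _ _ closing folded]) (use MinF.prems(1,2) in simp_all)
    with step show "h \<in> S"
      unfolding S_def accepts_iff_reaches by (auto intro: tau_star_reaches[OF tau_star_step])
  qed
  with MinF.prems(4) have "g \<in> S" by auto
  then show ?case by (simp add: S_def M_def)
qed auto

theorem synth_violation_complete:
  fixes \<phi> :: "('a :: finite) fml"
  assumes "fv \<phi> = {}" "guarded \<phi>" "sHML \<phi>"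
  shows "violation_complete (synth \<phi>) \<phi>"
  unfolding violation_complete_def
  using not_rejects_synth_subst_fml[of \<phi> Var] assms by (auto simp: sem_closed)

theorem synth_satisfaction_complete:
  fixes \<phi> :: "('a :: finite) fml"
  assumes "fv \<phi> = {}" "guarded \<phi>" "cHML \<phi>"
  shows "satisfaction_complete (synth \<phi>) \<phi>"
  unfolding satisfaction_complete_def
  using accepts_synth_subst_fml[of \<phi> Var] assms by (auto simp: sem_closed)

theorem mainTheorem10:
  fixes \<phi> :: "('a::finite) fml"
  shows "(closed \<phi> \<and> guarded \<phi> \<and> sHML \<phi> \<longrightarrow>
            sound (synth \<phi>) \<phi> \<and> violation_complete (synth \<phi>) \<phi>) \<and>
         (closed \<phi> \<and> guarded \<phi> \<and> cHML \<phi> \<longrightarrow>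
            sound (synth \<phi>) \<phi> \<and> satisfaction_complete (synth \<phi>) \<phi>)"
  by (auto simp: closed_def intro: synth_sound synth_violation_complete synth_satisfaction_complete)

end
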